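(* Let $T$ be a supercritical Bienaym\'e–Galton–Watson tree as in the context, with extinction probability $q$ and offspring generating function $f$, and let $\varepsilon_0>0$ satisfy $0<q+2\varepsilon_0<1$ and $f'(q+2\varepsilon_0)+2\varepsilon_0<1$. Let $\mathcal P$ be a (measurable) property of rooted labelled trees with resistances on their edges, and suppose $$\Pr\{T^j\text{ does not have property }\mathcal P\mid \langle j\rangle\in T_1\}\le q+2\varepsilon_0.$$ Then (a) with probability one, for every infinite path $\langle i_1\rangle,\langle i_1,i_2\rangle,\dots$ in $T$ there exist infinitely many $n$ and integers $j_{n+1}\ne i_{n+1}$ with $\langle i_1,\dots,i_n,j_{n+1}\rangle\in T$ and such that $T^{j_{n+1}}(i_1,\dots,i_n)$ has property $\mathcal P$; (b) if $\Gamma(i_1,\dots,i_n)$ denotes the number of $k\in\{2,\dots,n\}$ for which there exists $j_k\ne i_k$ with $\langle i_1,\dots,i_{k-1},j_k\rangle\in T$ and $T^{j_k}(i_1,\dots,i_{k-1})$ having property $\mathcal P$, then there are constants $0<C_1,C_2<\infty$ such that for all $n\ge 2$ $$\Pr\Big\{T_n\ne\emptyset\text{ and }\min_{\langle i_1,\dots,i_n\rangle\in T_n}\Gamma(i_1,\dots,i_n)\le C_1 n\Big\}\le e^{-C_2 n}.$$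
   Context: $T$ is the Ulam–Harris-labelled family tree of a Bienaym\'e–Galton–Watson process with $Z_0=1$, offspring mean $1<\gamma=\mathbb E Z_1<\infty$, offspring generating function $f(z)=\sum_n\Pr\{Z_1=n\}z^n$ and extinction probability $q<1$; root $\langle 0\rangle$, children of $\langle i_1,\dots,i_{k-1}\rangle$ are $\langle i_1,\dots,i_k\rangle$; $T_k$ is the $k$th generation. Each edge has an independent resistance with distribution function $F$ on $[0,\infty)$, independent of the tree. For $\langle i_1,\dots,i_n,j\rangle\in T$ ($n\ge 0$; for $n=0$ read $\langle i_1,\dots,i_n\rangle$ as $\langle 0\rangle$), $T^j(i_1,\dots,i_n)$ is the subtree of $T$ (with its resistances) whose vertices are $\langle i_1,\dots,i_n\rangle$, $\langle i_1,\dots,i_n,j\rangle$ and all descendants of $\langle i_1,\dots,i_n,j\rangle$, rooted at $\langle i_1,\dots,i_n\rangle$; $T^j=T^j(0)$. *)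

theory Defs
  imports "HOL-Probability.Probability"
begin

text \<open>A vertex is a list of positive integers; the root
  \<open>\<langle>0\<rangle>\<close> is the empty list and \<open>\<langle>i1,...,ik\<rangle>\<close> is the list [i1,...,ik].
  \<open>N v \<omega>\<close> is the number of children of vertex v (used only if v is in the tree),
  the children of v being v @ [j] for 1 \<le> j \<le> N v \<omega>.
  \<open>R v \<omega>\<close> is the resistance of the edge joining v (v \<noteq> []) to its parent.\<close>

definition in_tree :: "(nat list \<Rightarrow> 'a \<Rightarrow> nat) \<Rightarrow> 'a \<Rightarrow> nat list \<Rightarrow> bool" where
  "in_tree N \<omega> v \<longleftrightarrow> (\<forall>k < length v. 1 \<le> v ! k \<and> v ! k \<le> N (take k v) \<omega>)"

definition generation :: "(nat list \<Rightarrow> 'a \<Rightarrow> nat) \<Rightarrow> 'a \<Rightarrow> nat \<Rightarrow> nat list set" where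
  "generation N \<omega> k = {v. length v = k \<and> in_tree N \<omega> v}"

definition extinction_prob :: "'a measure \<Rightarrow> (nat list \<Rightarrow> 'a \<Rightarrow> nat) \<Rightarrow> real" where
  "extinction_prob M N = measure M {\<omega> \<in> space M. \<exists>k. generation N \<omega> k = {}}"

text \<open>Rooted labelled trees with edge resistances are encoded as functions
  \<open>t :: nat list \<Rightarrow> bool \<times> real\<close>: fst (t w) says whether w is a vertex, snd (t w)
  is the resistance of the edge from w to its parent (0 for the root and for
  non-vertices).\<close>
definition tree_space :: "(nat list \<Rightarrow> bool \<times> real) measure" where
  "tree_space = PiM UNIV (\<lambda>_. count_space UNIV \<Otimes>\<^sub>M borel)"

text \<open>The subtree T^j(u): vertices u, u@[j] and all descendants of u@[j], rooted at u.
  It is relabelled by stripping the prefix u, so that its root is [] and the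
  child of the root is [j] (the labels below u are kept).\<close>
definition subtree ::
  "(nat list \<Rightarrow> 'a \<Rightarrow> nat) \<Rightarrow> (nat list \<Rightarrow> 'a \<Rightarrow> real) \<Rightarrow> nat list \<Rightarrow> nat \<Rightarrow> 'a
     \<Rightarrow> nat list \<Rightarrow> bool \<times> real" where
  "subtree N R u j \<omega> w =
     (if w = [] then (True, 0)
      else if hd w = j \<and> in_tree N \<omega> (u @ w) then (True, R (u @ w) \<omega>)
      else (False, 0))"

definition gen_fun :: "nat pmf \<Rightarrow> real \<Rightarrow> real" where
  "gen_fun p z = (\<Sum>n. pmf p n * z ^ n)"

definition Gamma ::
  "(nat list \<Rightarrow> 'a \<Rightarrow> nat) \<Rightarrow> (nat list \<Rightarrow> 'a \<Rightarrow> real) \<Rightarrow> ((nat list \<Rightarrow> bool \<times> real) \<Rightarrow> bool)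
     \<Rightarrow> 'a \<Rightarrow> nat list \<Rightarrow> nat" where
  "Gamma N R P \<omega> v = card {k \<in> {2..length v}. \<exists>j. j \<noteq> v ! (k - 1)
       \<and> in_tree N \<omega> (take (k - 1) v @ [j]) \<and> P (subtree N R (take (k - 1) v) j \<omega>)}"

end

(*
  Fix lam in (0,1) and weight every vertex v of the n-th generation by lam ^ Gamma v. The
  weight factorises over the levels of v: the factor at level k is lam if the ancestor at
  level k has a sibling whose subtree has property P, and 1 otherwise. For a fixed word these
  factors depend on disjoint sets of the independent labels (offspring numbers and
  resistances), so the expected total weight of generation n is gamma * c ^ (n - 1), where
  gamma is the mean offspring number and c is the expected sum of the factors over the
  children of the root. A child of a root with m children has factor 1 only if its m - 1
  siblings all fail P, which happens with probability at most b ^ (m - 1), b = q + 2 eps0;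
  hence c <= lam * gamma + f'(b), and lam = (1 - f'(b)) / (2 gamma) makes c <= (1 + f'(b)) / 2 < 1.
  Markov's inequality bounds the probability that some vertex of generation n has
  Gamma <= C1 n by lam ^ (- C1 n) * gamma * c ^ (n - 1), which decays exponentially once C1 is
  small; Borel--Cantelli then makes Gamma grow linearly along every infinite path, which is (a).
  For small n, (b) follows from an event of positive probability on which every child of the
  root has two children with property P, so that Gamma >= 1 from the second generation on.
*)

theory Submission
  imports Defs
begin

lemma prod_of_bool: "finite A \<Longrightarrow> (\<Prod>x\<in>A. of_bool (Q x)) = (of_bool (\<forall>x\<in>A. Q x) :: 'a::comm_semiring_1)"
  by (induction A rule: finite_induct) auto

lemma (in finite_measure) measure_le_of_subset: "A \<in> sets M \<Longrightarrow> S \<subseteq> A \<Longrightarrow> measure M S \<le> measure M A"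
  by (cases "S \<in> sets M") (auto intro: finite_measure_mono simp: measure_notin_sets)

lemma nn_integral_of_bool:
  assumes "Measurable.pred M Q"
  shows "(\<integral>\<^sup>+\<omega>. ennreal (of_bool (Q \<omega>)) \<partial>M) = emeasure M {\<omega> \<in> space M. Q \<omega>}"
proof -
  have "(\<integral>\<^sup>+\<omega>. ennreal (of_bool (Q \<omega>)) \<partial>M) = (\<integral>\<^sup>+\<omega>. indicator {\<omega> \<in> space M. Q \<omega>} \<omega> \<partial>M)"
    by (rule nn_integral_cong) (auto simp: indicator_def)
  then show ?thesis using assms by simp
qed

lemma powr_power_le_exp:
  fixes lam a c :: real
  assumes lam: "0 < lam" "lam < 1" and a: "0 < a" and c: "0 \<le> c" "c \<le> ln a / (2 * ln lam)"
  shows "lam powr (- (c * n)) * a ^ n \<le> exp (ln a / 2 * n)"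
proof -
  have "ln lam < 0" using lam by simp
  then have "ln a / 2 \<le> c * ln lam"
    using c(2) by (simp add: le_divide_eq mult.commute)
  then have "real n * (ln a / 2) \<le> real n * (c * ln lam)" by (rule mult_left_mono) simp
  then have "real n * ln a - c * real n * ln lam \<le> ln a / 2 * real n"
    by (simp add: algebra_simps)
  moreover have "lam powr (- (c * n)) * a ^ n = exp (real n * ln a - c * real n * ln lam)"
  proof -
    have "a ^ n = exp (real n * ln a)" using a by (simp add: exp_of_nat_mult)
    moreover have "lam powr (- (c * n)) = exp (- (c * real n * ln lam))"
      using lam by (simp add: powr_def)
    ultimately show ?thesis by (simp add: mult_exp_exp)
  qed
  ultimately show ?thesis by simp
qed

lemma eventually_mult_exp_le:
  fixes K \<kappa> :: real
  assumes "0 < \<kappa>"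
  shows "\<exists>n0. \<forall>n\<ge>n0. K * exp (- \<kappa> * real n) \<le> exp (- \<kappa> / 2 * real n)"
proof -
  have "exp (- \<kappa> / 2 * real n) = exp (- \<kappa> / 2) ^ n" for n
    by (simp add: exp_of_nat_mult[symmetric] mult.commute)
  moreover have "(\<lambda>n. K * exp (- \<kappa> / 2) ^ n) \<longlonglongrightarrow> 0"
    by (intro tendsto_mult_right_zero LIMSEQ_power_zero) (use assms in simp)
  ultimately have "\<forall>\<^sub>F n in sequentially. K * exp (- \<kappa> / 2 * real n) < 1"
    by (simp add: order_tendstoD(2))
  then obtain n0 where n0: "\<And>n. n0 \<le> n \<Longrightarrow> K * exp (- \<kappa> / 2 * real n) < 1"
    unfolding eventually_sequentially by blast
  have "K * exp (- \<kappa> * n) \<le> exp (- \<kappa> / 2 * n)" if "n0 \<le> n" for n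
  proof -
    have "K * exp (- \<kappa> * n) = K * exp (- \<kappa> / 2 * n) * exp (- \<kappa> / 2 * n)"
      by (simp flip: exp_add)
    also have "\<dots> \<le> 1 * exp (- \<kappa> / 2 * n)"
      using n0[OF that] by (intro mult_right_mono) auto
    finally show ?thesis by simp
  qed
  then show ?thesis by blast
qed

lemma exp_decay_of_bounds:
  fixes u :: "nat \<Rightarrow> real"
  assumes small: "\<And>n. m \<le> n \<Longrightarrow> n < n0 \<Longrightarrow> u n \<le> r" and r: "r < 1"
    and large: "\<And>n. n0 \<le> n \<Longrightarrow> u n \<le> exp (- c * n)" and c: "0 < c"
  shows "\<exists>C>0. \<forall>n\<ge>m. u n \<le> exp (- C * n)"
proof -
  define r' where "r' = max r (1 / 2)"
  have r': "0 < r'" "r' < 1" "r \<le> r'" using r by (auto simp: r'_def)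
  define C where "C = min c (- ln r' / (real n0 + 1))"
  have C: "0 < C" "C \<le> c" "C \<le> - ln r' / (real n0 + 1)"
    using c r' by (auto simp: C_def divide_neg_pos)
  have "u n \<le> exp (- C * n)" if "m \<le> n" for n
  proof (cases "n0 \<le> n")
    case True
    have "exp (- c * n) \<le> exp (- C * n)" using C(2) by (simp add: mult_right_mono)
    then show ?thesis using large[OF True] by linarith
  next
    case False
    have "C * n \<le> - ln r' / (real n0 + 1) * (real n0 + 1)"
      using C False by (intro mult_mono) auto
    then have "ln r' \<le> - C * n" by simp
    then have "r' \<le> exp (- C * n)" using r' by (metis exp_ln exp_le_cancel_iff)
    then show ?thesis using small[OF that] False r' by linarith
  qed
  then show ?thesis using C(1) by blast
qed

lemma deriv_gen_fun:
  assumes mean: "summable (\<lambda>n. real n * pmf p n)" and b: "0 \<le> b" "b < 1"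
  shows "summable (\<lambda>m. real m * pmf p m * b ^ (m - 1))"
    and "deriv (gen_fun p) b = (\<Sum>m. real m * pmf p m * b ^ (m - 1))"
proof -
  have "summable (\<lambda>n. pmf p n)"
    by (rule summable_comparison_test'[OF mean, of 1]) (simp add: mult_le_cancel_right1)
  then have pmf_1: "summable (\<lambda>n. pmf p n * 1 ^ n)" by simp
  have "summable (\<lambda>n. pmf p n * x ^ n)" if "norm x < 1" for x :: real
    by (rule powser_inside[OF pmf_1]) (use that in simp)
  then have diffs: "summable (\<lambda>n. diffs (pmf p) n * b ^ n)"
    by (intro termdiff_converges[where K=1]) (use b in auto)
  have shift: "(\<lambda>n. real (Suc n) * pmf p (Suc n) * b ^ (Suc n - 1)) = (\<lambda>n. diffs (pmf p) n * b ^ n)"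
    by (simp add: diffs_def fun_eq_iff)
  show s: "summable (\<lambda>m. real m * pmf p m * b ^ (m - 1))"
    using diffs unfolding shift[symmetric] by (subst summable_Suc_iff[symmetric])
  have "DERIV (\<lambda>x. \<Sum>n. pmf p n * x ^ n) b :> (\<Sum>n. diffs (pmf p) n * b ^ n)"
    by (rule termdiffs_strong[OF pmf_1]) (use b in simp)
  moreover have "(\<Sum>n. diffs (pmf p) n * b ^ n) = (\<Sum>m. real m * pmf p m * b ^ (m - 1))"
    using suminf_split_head[OF s] unfolding shift by simp
  ultimately show "deriv (gen_fun p) b = (\<Sum>m. real m * pmf p m * b ^ (m - 1))"
    using DERIV_imp_deriv by (simp add: gen_fun_def[abs_def])
qed

lemma deriv_gen_fun_nonneg:
  assumes "summable (\<lambda>n. real n * pmf p n)" "0 \<le> b" "b < 1"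
  shows "0 \<le> deriv (gen_fun p) b"
  unfolding deriv_gen_fun(2)[OF assms]
  by (rule suminf_nonneg[OF deriv_gen_fun(1)[OF assms]]) (use assms in simp)

lemma exists_pmf_ge_2:
  assumes "1 < (\<Sum>n. real n * pmf p n)"
  shows "\<exists>m\<ge>2. 0 < pmf p m"
proof (rule ccontr)
  assume "\<not> (\<exists>m\<ge>2. 0 < pmf p m)"
  then have "real n * pmf p n = 0" if "n \<notin> {1}" for n
    using that pmf_nonneg[of p n] by (cases "n = 0") (auto simp: not_less)
  then have "(\<Sum>n. real n * pmf p n) = pmf p 1"
    using suminf_finite[of "{1}" "\<lambda>n. real n * pmf p n"] by simp
  then show False using assms pmf_le_1[of p 1] by simp
qed

section \<open>Ulam--Harris words and labellings\<close>

text \<open>Sums over all words of a given length, as iterated series so that integrals and products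
  can be taken one letter at a time.\<close>
fun word_sum :: "nat \<Rightarrow> (nat list \<Rightarrow> ennreal) \<Rightarrow> ennreal" where
  "word_sum 0 f = f []"
| "word_sum (Suc n) f = (\<Sum>i. word_sum n (\<lambda>w. f (i # w)))"

lemma word_sum_ge: "length v = n \<Longrightarrow> f v \<le> word_sum n f"
proof (induction n arbitrary: v f)
  case (Suc n)
  then obtain i w where v: "v = i # w" "length w = n" by (metis length_Suc_conv)
  have "f v \<le> word_sum n (\<lambda>w. f (i # w))" using Suc.IH[of w "\<lambda>w. f (i # w)"] v by simp
  also have "\<dots> \<le> (\<Sum>i. word_sum n (\<lambda>w. f (i # w)))"
    using sum_le_suminf[of "\<lambda>i. word_sum n (\<lambda>w. f (i # w))" "{i}"] by (simp add: summableI)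
  finally show ?case by simp
qed simp

lemma word_sum_cong: "(\<And>v. length v = n \<Longrightarrow> f v = g v) \<Longrightarrow> word_sum n f = word_sum n g"
proof (induction n arbitrary: f g)
  case (Suc n)
  have "word_sum n (\<lambda>w. f (i # w)) = word_sum n (\<lambda>w. g (i # w))" for i
    by (rule Suc.IH) (simp add: Suc.prems)
  then show ?case by simp
qed simp

lemma word_sum_cmult: "word_sum n (\<lambda>v. c * f v) = c * word_sum n f"
  by (induction n arbitrary: f) (simp_all add: ennreal_suminf_cmult)

lemma word_sum_prod: "word_sum n (\<lambda>v. \<Prod>k<n. g k (v!k)) = (\<Prod>k<n. \<Sum>i. g k i)"
proof (induction n arbitrary: g)
  case (Suc n)
  have "word_sum (Suc n) (\<lambda>v. \<Prod>k<Suc n. g k (v!k))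
      = (\<Sum>i. word_sum n (\<lambda>w. g 0 i * (\<Prod>k<n. g (Suc k) (w!k))))"
    by (simp del: prod.lessThan_Suc add: prod.lessThan_Suc_shift)
  also have "\<dots> = (\<Sum>i. g 0 i) * (\<Prod>k<n. \<Sum>j. g (Suc k) j)"
    by (simp only: word_sum_cmult Suc.IH[of "\<lambda>k. g (Suc k)"] ennreal_suminf_multc)
  finally show ?case by (simp del: prod.lessThan_Suc add: prod.lessThan_Suc_shift)
qed simp

lemma borel_measurable_word_sum[measurable]:
  "(\<And>v. f v \<in> borel_measurable M) \<Longrightarrow> (\<lambda>\<omega>. word_sum n (\<lambda>v. f v \<omega>)) \<in> borel_measurable M"
proof (induction n arbitrary: f)
  case (Suc n)
  have "(\<lambda>\<omega>. word_sum n (\<lambda>w. f (i # w) \<omega>)) \<in> borel_measurable M" for i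
    by (rule Suc.IH) (rule Suc.prems)
  then show ?case by (simp add: borel_measurable_suminf)
qed simp

lemma nn_integral_word_sum:
  "(\<And>v. f v \<in> borel_measurable M) \<Longrightarrow>
     (\<integral>\<^sup>+\<omega>. word_sum n (\<lambda>v. f v \<omega>) \<partial>M) = word_sum n (\<lambda>v. \<integral>\<^sup>+\<omega>. f v \<omega> \<partial>M)"
proof (induction n arbitrary: f)
  case (Suc n)
  have m: "(\<lambda>\<omega>. word_sum n (\<lambda>w. f (i # w) \<omega>)) \<in> borel_measurable M" for i
    by (rule borel_measurable_word_sum) (rule Suc.prems)
  have "(\<integral>\<^sup>+\<omega>. word_sum (Suc n) (\<lambda>v. f v \<omega>) \<partial>M)
      = (\<Sum>i. \<integral>\<^sup>+\<omega>. word_sum n (\<lambda>w. f (i # w) \<omega>) \<partial>M)"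
    by (simp add: nn_integral_suminf[OF m])
  also have "\<dots> = (\<Sum>i. word_sum n (\<lambda>w. \<integral>\<^sup>+\<omega>. f (i # w) \<omega> \<partial>M))"
    using Suc.IH[of "\<lambda>w. f (i # w)" for i] Suc.prems by simp
  finally show ?case by simp
qed simp

lemma in_tree_append:
  "in_tree N \<omega> (u @ w) \<longleftrightarrow> in_tree N \<omega> u \<and> (\<forall>k<length w. 1 \<le> w!k \<and> w!k \<le> N (u @ take k w) \<omega>)"
proof
  assume a: "in_tree N \<omega> (u @ w)"
  have "1 \<le> u ! k \<and> u ! k \<le> N (take k u) \<omega>" if "k < length u" for k
    using that a[unfolded in_tree_def, rule_format, of k] by (simp add: nth_append)
  moreover have "1 \<le> w!k \<and> w!k \<le> N (u @ take k w) \<omega>" if "k < length w" for k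
    using that a[unfolded in_tree_def, rule_format, of "length u + k"] by (simp add: nth_append)
  ultimately show "in_tree N \<omega> u \<and> (\<forall>k<length w. 1 \<le> w!k \<and> w!k \<le> N (u @ take k w) \<omega>)"
    by (simp add: in_tree_def)
next
  assume a: "in_tree N \<omega> u \<and> (\<forall>k<length w. 1 \<le> w!k \<and> w!k \<le> N (u @ take k w) \<omega>)"
  show "in_tree N \<omega> (u @ w)"
    unfolding in_tree_def
  proof (intro allI impI)
    fix k assume k: "k < length (u @ w)"
    show "1 \<le> (u @ w) ! k \<and> (u @ w) ! k \<le> N (take k (u @ w)) \<omega>"
    proof (cases "k < length u")
      case True then show ?thesis using a by (simp add: nth_append in_tree_def)
    next
      case False
      then obtain k' where "k = length u + k'" by (metis le_Suc_ex not_less)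
      with k False a show ?thesis by (simp add: nth_append)
    qed
  qed
qed

lemma in_tree_snoc: "in_tree N \<omega> (u @ [j]) \<longleftrightarrow> in_tree N \<omega> u \<and> 1 \<le> j \<and> j \<le> N u \<omega>"
  by (simp add: in_tree_append)

lemma in_tree_singleton: "in_tree N \<omega> [j] \<longleftrightarrow> 1 \<le> j \<and> j \<le> N [] \<omega>"
  using in_tree_snoc[of N \<omega> "[]" j] by (simp add: in_tree_def)

lemma in_tree_take: "in_tree N \<omega> v \<Longrightarrow> in_tree N \<omega> (take k v)"
  using in_tree_append[of N \<omega> "take k v" "drop k v"] by simp

lemma in_tree_nth: "in_tree N \<omega> v \<Longrightarrow> k < length v \<Longrightarrow> 1 \<le> v!k \<and> v!k \<le> N (take k v) \<omega>"
  unfolding in_tree_def by blast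

lemma finite_generation: "finite (generation N \<omega> n)"
proof (induction n)
  case 0
  have "generation N \<omega> 0 \<subseteq> {[]}" by (auto simp: generation_def)
  then show ?case by (rule finite_subset) simp
next
  case (Suc n)
  have "generation N \<omega> (Suc n) \<subseteq> (\<lambda>(v, j). v @ [j]) ` (SIGMA v:generation N \<omega> n. {..N v \<omega>})"
  proof
    fix v assume "v \<in> generation N \<omega> (Suc n)"
    then have v: "length v = Suc n" "in_tree N \<omega> v" by (auto simp: generation_def)
    then obtain u j where u: "v = u @ [j]" by (metis length_Suc_conv_rev)
    with v have "u \<in> generation N \<omega> n" "j \<le> N u \<omega>" by (auto simp: generation_def in_tree_snoc)
    then show "v \<in> (\<lambda>(v, j). v @ [j]) ` (SIGMA v:generation N \<omega> n. {..N v \<omega>})" using u by force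
  qed
  then show ?case by (rule finite_subset) (use Suc in auto)
qed

lemma Gamma_eq_card_levels:
  "Gamma N R P \<omega> v = card {k \<in> {1..<length v}. \<exists>j. j \<noteq> v!k
       \<and> in_tree N \<omega> (take k v @ [j]) \<and> P (subtree N R (take k v) j \<omega>)}"
proof -
  have shift: "{k \<in> {2..length v}. Q (k - 1)} = Suc ` {k \<in> {1..<length v}. Q k}" for Q
  proof (rule set_eqI)
    fix k show "k \<in> {k \<in> {2..length v}. Q (k - 1)} \<longleftrightarrow> k \<in> Suc ` {k \<in> {1..<length v}. Q k}"
      by (cases k) (auto simp: image_iff)
  qed
  show ?thesis
    unfolding Gamma_def shift[of "\<lambda>k. \<exists>j. j \<noteq> v!k \<and> in_tree N \<omega> (take k v @ [j])
      \<and> P (subtree N R (take k v) j \<omega>)"]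
    by (simp add: card_image)
qed

lemma bex_generation_Gamma_le:
  assumes "generation N \<omega> n \<noteq> {}" "real (Min (Gamma N R P \<omega> ` generation N \<omega> n)) \<le> t"
  shows "\<exists>v\<in>generation N \<omega> n. real (Gamma N R P \<omega> v) \<le> t"
proof -
  have "Min (Gamma N R P \<omega> ` generation N \<omega> n) \<in> Gamma N R P \<omega> ` generation N \<omega> n"
    using assms(1) by (simp add: finite_generation)
  then show ?thesis using assms(2) by auto
qed

lemma infinitely_many_good_levels:
  fixes c :: real
  assumes c: "0 < c"
    and growth: "\<forall>\<^sub>F n in sequentially. \<forall>v\<in>generation N \<omega> n. c * n < real (Gamma N R P \<omega> v)"
    and path: "\<forall>n. in_tree N \<omega> (map x [0..<n])"
  shows "\<exists>\<^sub>\<infinity>n. \<exists>j. j \<noteq> x n \<and> in_tree N \<omega> (map x [0..<n] @ [j])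
           \<and> P (subtree N R (map x [0..<n]) j \<omega>)"
proof (rule ccontr)
  define Q where "Q = {n. \<exists>j. j \<noteq> x n \<and> in_tree N \<omega> (map x [0..<n] @ [j])
           \<and> P (subtree N R (map x [0..<n]) j \<omega>)}"
  assume "\<not> ?thesis"
  then have "finite Q" unfolding Q_def INFM_iff_infinite by simp
  have Gamma_le: "Gamma N R P \<omega> (map x [0..<n]) \<le> card Q" for n
    unfolding Gamma_eq_card_levels using \<open>finite Q\<close>
    by (intro card_mono) (auto simp: Q_def take_map)
  obtain n0 where n0: "\<And>n. n0 \<le> n \<Longrightarrow> \<forall>v\<in>generation N \<omega> n. c * n < real (Gamma N R P \<omega> v)"
    using growth unfolding eventually_sequentially by blast
  define n where "n = max n0 (nat \<lceil>card Q / c\<rceil>)"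
  have "card Q / c \<le> real (nat \<lceil>card Q / c\<rceil>)" by (rule real_nat_ceiling_ge)
  also have "\<dots> \<le> real n" by (simp add: n_def)
  finally have "card Q \<le> c * n" using c by (simp add: pos_divide_le_eq mult.commute)
  moreover note n0[of n]
  moreover have "map x [0..<n] \<in> generation N \<omega> n" using path by (simp add: generation_def)
  ultimately show False using Gamma_le[of n] by (fastforce simp: n_def)
qed

definition label_space :: "(nat \<times> real) measure" where
  "label_space = count_space UNIV \<Otimes>\<^sub>M borel"

text \<open>A labelling \<open>x\<close> of all Ulam--Harris words gives each word its number of children
  and the resistance of the edge above it; \<open>subtree_of j x\<close> is the tree \<open>T\<^sup>j\<close> read off
  such a labelling. That \<open>j\<close> is a child of the root is not checked (see \<open>subtree_eq\<close>).\<close>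
definition subtree_of :: "nat \<Rightarrow> (nat list \<Rightarrow> nat \<times> real) \<Rightarrow> nat list \<Rightarrow> bool \<times> real" where
  "subtree_of j x w =
     (if w = [] then (True, 0)
      else if hd w = j \<and> (\<forall>k\<in>{1..<length w}. 1 \<le> w!k \<and> w!k \<le> fst (x (take k w)))
      then (True, snd (x w)) else (False, 0))"

lemma measurable_label_at[measurable]:
  "(\<lambda>y. y z) \<in> measurable (PiM I (\<lambda>_. label_space)) label_space"
proof (cases "z \<in> I")
  case False
  then have "\<forall>y\<in>space (PiM I (\<lambda>_. label_space)). y z = undefined"
    by (auto simp: space_PiM PiE_def extensional_def)
  then show ?thesis
    by (subst measurable_cong[where g="\<lambda>_. undefined"]) (auto simp: label_space_def space_pair_measure)
qed measurable

lemma measurable_offspring_at[measurable]: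
  "(\<lambda>y. fst (y z)) \<in> measurable (PiM I (\<lambda>_. label_space)) (count_space UNIV)"
  using measurable_compose[OF measurable_label_at[unfolded label_space_def] measurable_fst]
  by (simp add: label_space_def)

lemma measurable_resistance_at[measurable]:
  "(\<lambda>y. snd (y z)) \<in> borel_measurable (PiM I (\<lambda>_. label_space))"
  using measurable_compose[OF measurable_label_at[unfolded label_space_def] measurable_snd]
  by (simp add: label_space_def)

lemma measurable_relabel:
  "(\<lambda>y w. y (g w)) \<in> measurable (PiM I (\<lambda>_. label_space)) (PiM UNIV (\<lambda>_. label_space))"
  by (rule measurable_PiM_single'[OF measurable_label_at])
    (auto simp: space_PiM label_space_def space_pair_measure)

lemma measurable_shift_word[measurable]:
  "(\<lambda>y w. y (u @ w)) \<in> measurable (PiM I (\<lambda>_. label_space)) (PiM UNIV (\<lambda>_. label_space))"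
  by (rule measurable_relabel)

lemma measurable_shift_tl[measurable]:
  "(\<lambda>y w. y (tl w)) \<in> measurable (PiM I (\<lambda>_. label_space)) (PiM UNIV (\<lambda>_. label_space))"
  by (rule measurable_relabel)

lemma measurable_subtree_of[measurable]:
  "subtree_of j \<in> measurable (PiM I (\<lambda>_. label_space)) tree_space"
  unfolding tree_space_def
proof (rule measurable_PiM_single')
  fix w :: "nat list"
  show "(\<lambda>x. subtree_of j x w) \<in> measurable (PiM I (\<lambda>_. label_space)) (count_space UNIV \<Otimes>\<^sub>M borel)"
    unfolding subtree_of_def label_space_def[symmetric] by measurable
qed (auto simp: space_PiM space_pair_measure)

lemma subtree_of_cong:
  assumes "\<And>w. w \<noteq> [] \<Longrightarrow> hd w = j \<Longrightarrow> x w = x' w"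
  shows "subtree_of j x = subtree_of j x'"
proof
  fix w show "subtree_of j x w = subtree_of j x' w"
  proof (cases "w \<noteq> [] \<and> hd w = j")
    case True
    have "x (take k w) = x' (take k w)" if "k \<in> {1..<length w}" for k
      using that True by (intro assms) auto
    then show ?thesis using True assms[of w] unfolding subtree_of_def by auto
  qed (auto simp: subtree_of_def)
qed

lemma subtree_of_tl: "subtree_of j x = subtree_of j (\<lambda>w. x (j # tl w))"
  by (rule subtree_of_cong) (metis list.collapse)

section \<open>Galton--Watson trees with independent labels\<close>

locale gw_tree = prob_space M for M :: "'a measure" +
  fixes N :: "nat list \<Rightarrow> 'a \<Rightarrow> nat" and R :: "nat list \<Rightarrow> 'a \<Rightarrow> real"
    and p :: "nat pmf" and Fd :: "real measure"
  assumes N_meas[measurable]: "\<And>v. N v \<in> measurable M (count_space UNIV)"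
    and R_meas[measurable]: "\<And>v. R v \<in> borel_measurable M"
    and Fd_prob: "prob_space Fd"
    and NR_distr: "\<And>v. distr M (count_space UNIV \<Otimes>\<^sub>M borel) (\<lambda>\<omega>. (N v \<omega>, R v \<omega>))
                     = measure_pmf p \<Otimes>\<^sub>M Fd"
    and NR_indep: "indep_vars (\<lambda>_. count_space UNIV \<Otimes>\<^sub>M borel) (\<lambda>v \<omega>. (N v \<omega>, R v \<omega>)) UNIV"
begin

definition label :: "nat list \<Rightarrow> 'a \<Rightarrow> nat \<times> real" where
  "label v \<omega> = (N v \<omega>, R v \<omega>)"

definition labels_below :: "nat list \<Rightarrow> 'a \<Rightarrow> nat list \<Rightarrow> nat \<times> real" where
  "labels_below u \<omega> = (\<lambda>w. label (u @ w) \<omega>)"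

lemma measurable_label[measurable]: "label v \<in> measurable M label_space"
  unfolding label_def label_space_def by measurable

lemma measurable_labels_below[measurable]:
  "labels_below u \<in> measurable M (PiM UNIV (\<lambda>_. label_space))"
  unfolding labels_below_def
  by (rule measurable_PiM_single'[OF measurable_label])
    (auto simp: space_PiM label_space_def space_pair_measure)

lemma offspring_labels_below: "fst (labels_below u \<omega> []) = N u \<omega>"
  by (simp add: labels_below_def label_def)

lemma indep_labels: "indep_vars (\<lambda>_. label_space) label UNIV"
  using NR_indep unfolding label_space_def label_def[abs_def] by simp

lemma distr_label: "distr M label_space (label v) = measure_pmf p \<Otimes>\<^sub>M Fd"
  using NR_distr[of v] unfolding label_space_def label_def[abs_def] by simp

lemma indep_vars_label_blocks:
  assumes "disjoint_family_on K L"
    and [measurable]: "\<And>j. j \<in> L \<Longrightarrow> \<Phi> j \<in> borel_measurable (PiM (K j) (\<lambda>_. label_space))"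
  shows "indep_vars (\<lambda>_. borel) (\<lambda>j \<omega>. \<Phi> j (restrict (\<lambda>z. label z \<omega>) (K j))) L"
proof -
  have "indep_vars (\<lambda>j. PiM (K j) (\<lambda>_. label_space)) (\<lambda>j \<omega>. restrict (\<lambda>i. label i \<omega>) (K j)) L"
    by (rule indep_vars_restrict[OF indep_labels]) (use assms in auto)
  then show ?thesis
    by (rule indep_vars_compose2) (rule assms(2))
qed

lemma distr_labels_below:
  "distr M (PiM UNIV (\<lambda>_. label_space)) (labels_below u) = PiM UNIV (\<lambda>_. measure_pmf p \<Otimes>\<^sub>M Fd)"
proof -
  have "indep_vars (\<lambda>_. label_space) (\<lambda>w. label (u @ w)) UNIV"
  proof -
    have "indep_vars (\<lambda>w. PiM {u @ w} (\<lambda>_. label_space)) (\<lambda>w \<omega>. restrict (\<lambda>i. label i \<omega>) {u @ w}) UNIV"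
      by (rule indep_vars_restrict[OF indep_labels]) (auto simp: disjoint_family_on_def)
    then have "indep_vars (\<lambda>_. label_space)
        (\<lambda>w \<omega>. (\<lambda>y. y (u @ w)) (restrict (\<lambda>i. label i \<omega>) {u @ w})) UNIV"
      by (rule indep_vars_compose2) simp
    then show ?thesis by simp
  qed
  then have "distr M (PiM UNIV (\<lambda>_. label_space)) (\<lambda>\<omega>. \<lambda>w\<in>UNIV. label (u @ w) \<omega>)
      = PiM UNIV (\<lambda>w. distr M label_space (label (u @ w)))"
    by (subst (asm) indep_vars_iff_distr_eq_PiM) (simp_all add: measurable_label)
  then show ?thesis by (simp add: distr_label labels_below_def[abs_def] restrict_UNIV)
qed

lemma nn_integral_labels_below:
  assumes [measurable]: "\<Psi> \<in> borel_measurable (PiM UNIV (\<lambda>_. label_space))"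
  shows "(\<integral>\<^sup>+\<omega>. \<Psi> (labels_below u \<omega>) \<partial>M) = (\<integral>\<^sup>+\<omega>. \<Psi> (labels_below [] \<omega>) \<partial>M)"
proof -
  have "(\<integral>\<^sup>+\<omega>. \<Psi> (labels_below u \<omega>) \<partial>M)
      = (\<integral>\<^sup>+y. \<Psi> y \<partial>distr M (PiM UNIV (\<lambda>_. label_space)) (labels_below u))"
    by (simp add: nn_integral_distr)
  also have "\<dots> = (\<integral>\<^sup>+y. \<Psi> y \<partial>distr M (PiM UNIV (\<lambda>_. label_space)) (labels_below []))"
    unfolding distr_labels_below ..
  finally show ?thesis by (simp add: nn_integral_distr)
qed

lemma distr_offspring: "distr M (count_space UNIV) (N v) = measure_pmf p"
proof -
  have "distr M (count_space UNIV) (N v) = distr M (count_space UNIV) (fst \<circ> label v)"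
    by (rule distr_cong) (auto simp: label_def)
  also have "\<dots> = distr (distr M label_space (label v)) (count_space UNIV) fst"
    by (rule distr_distr[symmetric])
      (auto simp: label_space_def intro: measurable_label[unfolded label_space_def])
  also have "\<dots> = distr (measure_pmf p \<Otimes>\<^sub>M Fd) (measure_pmf p) fst"
    unfolding distr_label by (rule distr_cong) auto
  finally show ?thesis by (simp add: prob_space.distr_pair_fst[OF Fd_prob])
qed

lemma nn_integral_offspring: "(\<integral>\<^sup>+\<omega>. g (N v \<omega>) \<partial>M) = (\<Sum>m. ennreal (pmf p m) * g m)"
proof -
  have "(\<integral>\<^sup>+\<omega>. g (N v \<omega>) \<partial>M) = (\<integral>\<^sup>+m. g m \<partial>distr M (count_space UNIV) (N v))"
    by (rule nn_integral_distr[symmetric]) auto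
  then show ?thesis
    unfolding distr_offspring nn_integral_measure_pmf nn_integral_count_space_nat .
qed

lemma prob_offspring_eq: "measure M {\<omega> \<in> space M. N v \<omega> = m} = pmf p m"
proof -
  have "emeasure M {\<omega> \<in> space M. N v \<omega> = m} = emeasure (distr M (count_space UNIV) (N v)) {m}"
    by (subst emeasure_distr) (auto intro!: arg_cong[where f="emeasure M"])
  then show ?thesis unfolding distr_offspring by (simp add: emeasure_pmf_single measure_def)
qed

text \<open>The offspring count of the root and the labels below each of its children live on
  disjoint sets of words, hence are independent.\<close>
definition root_block :: "nat \<Rightarrow> nat list set" where
  "root_block j = (if j = 0 then {[]} else {w. w \<noteq> [] \<and> hd w = j})"

lemma nn_integral_root_prod:
  assumes S: "finite S" "0 \<notin> S"
    and [measurable]: "\<And>j. h j \<in> borel_measurable (PiM UNIV (\<lambda>_. label_space))"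
  shows "(\<integral>\<^sup>+\<omega>. ennreal (g (N [] \<omega>)) * (\<Prod>j\<in>S. ennreal (h j (labels_below [j] \<omega>))) \<partial>M)
       = (\<integral>\<^sup>+\<omega>. ennreal (g (N [] \<omega>)) \<partial>M) * (\<Prod>j\<in>S. \<integral>\<^sup>+\<omega>. ennreal (h j (labels_below [j] \<omega>)) \<partial>M)"
proof -
  define \<Phi> where "\<Phi> j y = (if j = 0 then g (fst (y [])) else h j (\<lambda>w. y ([j] @ w)))" for j y
  define Z where "Z j \<omega> = ennreal (\<Phi> j (restrict (\<lambda>z. label z \<omega>) (root_block j)))" for j \<omega>
  have Z0: "Z 0 = (\<lambda>\<omega>. ennreal (g (N [] \<omega>)))"
    by (simp add: Z_def \<Phi>_def root_block_def label_def fun_eq_iff)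
  have Zj: "Z j = (\<lambda>\<omega>. ennreal (h j (labels_below [j] \<omega>)))" if "j \<in> S" for j
    using that S by (auto simp: Z_def \<Phi>_def root_block_def labels_below_def fun_eq_iff)
  have "indep_vars (\<lambda>_. borel) (\<lambda>j \<omega>. \<Phi> j (restrict (\<lambda>z. label z \<omega>) (root_block j))) (insert 0 S)"
    by (rule indep_vars_label_blocks) (auto simp: disjoint_family_on_def root_block_def \<Phi>_def)
  then have ind: "indep_vars (\<lambda>_. borel) Z (insert 0 S)"
    unfolding Z_def by (rule indep_vars_compose2) simp
  have "(\<integral>\<^sup>+\<omega>. (\<Prod>j\<in>insert 0 S. Z j \<omega>) \<partial>M) = (\<Prod>j\<in>insert 0 S. \<integral>\<^sup>+\<omega>. Z j \<omega> \<partial>M)"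
    by (rule indep_vars_nn_integral[OF _ ind]) (use S in auto)
  moreover have "(\<Prod>j\<in>S. Z j \<omega>) = (\<Prod>j\<in>S. ennreal (h j (labels_below [j] \<omega>)))" for \<omega>
    by (rule prod.cong) (simp_all add: Zj)
  moreover have "(\<Prod>j\<in>S. \<integral>\<^sup>+\<omega>. Z j \<omega> \<partial>M) = (\<Prod>j\<in>S. \<integral>\<^sup>+\<omega>. ennreal (h j (labels_below [j] \<omega>)) \<partial>M)"
    by (rule prod.cong) (simp_all add: Zj)
  ultimately show ?thesis
    by (simp only: prod.insert[OF S] Z0)
qed

lemma subtree_of_labels_below:
  "subtree_of j (labels_below [] \<omega>) = subtree_of j (\<lambda>w. labels_below [j] \<omega> (tl w))"
  by (subst subtree_of_tl) (simp add: labels_below_def)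

lemma prob_offspring_and_below_children:
  assumes S: "finite S" "0 \<notin> S"
    and [measurable]: "\<And>j. Measurable.pred (PiM UNIV (\<lambda>_. label_space)) (Q j)"
  shows "measure M {\<omega> \<in> space M. A (N [] \<omega>) \<and> (\<forall>j\<in>S. Q j (labels_below [j] \<omega>))}
       = measure M {\<omega> \<in> space M. A (N [] \<omega>)}
         * (\<Prod>j\<in>S. measure M {\<omega> \<in> space M. Q j (labels_below [j] \<omega>)})"
proof -
  have "(\<integral>\<^sup>+\<omega>. ennreal (of_bool (A (N [] \<omega>))) * (\<Prod>j\<in>S. ennreal (of_bool (Q j (labels_below [j] \<omega>)))) \<partial>M)
      = (\<integral>\<^sup>+\<omega>. ennreal (of_bool (A (N [] \<omega>))) \<partial>M)
        * (\<Prod>j\<in>S. \<integral>\<^sup>+\<omega>. ennreal (of_bool (Q j (labels_below [j] \<omega>))) \<partial>M)"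
    by (rule nn_integral_root_prod) (use S in auto)
  moreover have "ennreal (of_bool (A (N [] \<omega>))) * (\<Prod>j\<in>S. ennreal (of_bool (Q j (labels_below [j] \<omega>))))
      = ennreal (of_bool (A (N [] \<omega>) \<and> (\<forall>j\<in>S. Q j (labels_below [j] \<omega>))))" for \<omega>
    using S by (auto simp: prod_ennreal prod_of_bool)
  ultimately have "emeasure M {\<omega> \<in> space M. A (N [] \<omega>) \<and> (\<forall>j\<in>S. Q j (labels_below [j] \<omega>))}
      = emeasure M {\<omega> \<in> space M. A (N [] \<omega>)}
        * (\<Prod>j\<in>S. emeasure M {\<omega> \<in> space M. Q j (labels_below [j] \<omega>)})"
    using S by (simp add: nn_integral_of_bool)
  then show ?thesis
    by (simp add: emeasure_eq_measure prod_ennreal ennreal_mult'[symmetric] prod_nonneg)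
qed

lemma prob_offspring_and_subtrees:
  assumes S: "finite S" "0 \<notin> S" and [measurable]: "\<And>j. Measurable.pred tree_space (Q j)"
  shows "measure M {\<omega> \<in> space M. A (N [] \<omega>) \<and> (\<forall>j\<in>S. Q j (subtree_of j (labels_below [] \<omega>)))}
       = measure M {\<omega> \<in> space M. A (N [] \<omega>)}
         * (\<Prod>j\<in>S. measure M {\<omega> \<in> space M. Q j (subtree_of j (labels_below [] \<omega>))})"
proof -
  have "Measurable.pred (PiM UNIV (\<lambda>_. label_space)) (\<lambda>y. Q j (subtree_of j (\<lambda>w. y (tl w))))" for j
    by measurable
  then show ?thesis
    unfolding subtree_of_labels_below
    by (rule prob_offspring_and_below_children[OF S, where Q="\<lambda>j y. Q j (subtree_of j (\<lambda>w. y (tl w)))"])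
qed

lemma prob_labels_below:
  assumes [measurable]: "Measurable.pred (PiM UNIV (\<lambda>_. label_space)) Q"
  shows "measure M {\<omega> \<in> space M. Q (labels_below u \<omega>)} = measure M {\<omega> \<in> space M. Q (labels_below [] \<omega>)}"
  using nn_integral_labels_below[of "\<lambda>y. ennreal (of_bool (Q y))" u]
  by (simp add: nn_integral_of_bool measure_def)

lemma subtree_eq:
  assumes "in_tree N \<omega> u" "1 \<le> j" "j \<le> N u \<omega>"
  shows "subtree N R u j \<omega> = subtree_of j (labels_below u \<omega>)"
proof
  fix w
  show "subtree N R u j \<omega> w = subtree_of j (labels_below u \<omega>) w"
  proof (cases "w \<noteq> [] \<and> hd w = j")
    case True
    then obtain w' where w: "w = j # w'" by (cases w) auto
    define Q where "Q k \<longleftrightarrow> 1 \<le> w!k \<and> w!k \<le> N (u @ take k w) \<omega>" for k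
    have "Q 0" using assms w by (simp add: Q_def)
    have "(\<forall>k<length w. Q k) \<longleftrightarrow> (\<forall>k\<in>{1..<length w}. Q k)"
    proof (intro iffI allI impI)
      fix k assume "\<forall>k\<in>{1..<length w}. Q k" "k < length w"
      then show "Q k" using \<open>Q 0\<close> by (cases k) auto
    qed auto
    then have "in_tree N \<omega> (u @ w) \<longleftrightarrow> (\<forall>k\<in>{1..<length w}. 1 \<le> w!k \<and> w!k \<le> N (u @ take k w) \<omega>)"
      unfolding in_tree_append Q_def using assms(1) by simp
    moreover have "subtree N R u j \<omega> w
        = (if in_tree N \<omega> (u @ w) then (True, R (u @ w) \<omega>) else (False, 0))"
      using True by (simp add: subtree_def)
    moreover have "subtree_of j (labels_below u \<omega>) w
        = (if \<forall>k\<in>{1..<length w}. 1 \<le> w!k \<and> w!k \<le> N (u @ take k w) \<omega>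
           then (True, R (u @ w) \<omega>) else (False, 0))"
      using True by (simp add: subtree_of_def labels_below_def label_def)
    ultimately show ?thesis by simp
  next
    case False
    then have "subtree N R u j \<omega> w = (if w = [] then (True, 0) else (False, 0))"
      by (auto simp: subtree_def)
    moreover have "subtree_of j (labels_below u \<omega>) w = (if w = [] then (True, 0) else (False, 0))"
      using False by (auto simp: subtree_of_def)
    ultimately show ?thesis by simp
  qed
qed

end

section \<open>Weighted generation sizes\<close>

locale gw_weighted = gw_tree +
  fixes P :: "(nat list \<Rightarrow> bool \<times> real) \<Rightarrow> bool" and lam :: real
  assumes P_meas[measurable]: "Measurable.pred tree_space P" and lam_nonneg: "0 \<le> lam"
begin

definition good_child :: "nat \<Rightarrow> 'a \<Rightarrow> bool" where
  "good_child j \<omega> \<longleftrightarrow> P (subtree_of j (labels_below [] \<omega>))"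

lemma measurable_good_child[measurable]: "Measurable.pred M (good_child j)"
  unfolding good_child_def by measurable

definition child_indicator :: "nat \<Rightarrow> (nat list \<Rightarrow> nat \<times> real) \<Rightarrow> real" where
  "child_indicator i x = (if 1 \<le> i \<and> i \<le> fst (x []) then 1 else 0)"

definition sibling_weight :: "nat \<Rightarrow> (nat list \<Rightarrow> nat \<times> real) \<Rightarrow> real" where
  "sibling_weight i x = (if 1 \<le> i \<and> i \<le> fst (x []) then
     (if \<exists>j. j \<noteq> i \<and> 1 \<le> j \<and> j \<le> fst (x []) \<and> P (subtree_of j x) then lam else 1) else 0)"

text \<open>The level factors of a word outside the tree vanish, so summing their products over all
  words of length \<open>n\<close> (\<open>weighted_count\<close>) only counts \<open>T\<^sub>n\<close>.\<close>
definition level_weight :: "nat list \<Rightarrow> nat \<Rightarrow> (nat list \<Rightarrow> nat \<times> real) \<Rightarrow> real" where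
  "level_weight v k y = (if k = 0 then child_indicator (v!0) y
     else sibling_weight (v!k) (\<lambda>w. y (take k v @ w)))"

definition level_block :: "nat list \<Rightarrow> nat \<Rightarrow> nat list set" where
  "level_block v k = {take k v @ w | w. w = [] \<or> hd w \<noteq> v!k}"

lemma measurable_child_indicator[measurable]:
  "child_indicator i \<in> borel_measurable (PiM I (\<lambda>_. label_space))"
  unfolding child_indicator_def by measurable

lemma measurable_sibling_weight[measurable]:
  "sibling_weight i \<in> borel_measurable (PiM I (\<lambda>_. label_space))"
  unfolding sibling_weight_def by measurable

lemma measurable_level_weight[measurable]:
  "level_weight v k \<in> borel_measurable (PiM I (\<lambda>_. label_space))"
  unfolding level_weight_def by measurable

lemma level_weight_nonneg: "0 \<le> level_weight v k y"
  using lam_nonneg by (simp add: level_weight_def sibling_weight_def child_indicator_def)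

lemma sibling_weight_cong:
  assumes "x [] = x' []" "\<And>w. w \<noteq> [] \<Longrightarrow> hd w \<noteq> i \<Longrightarrow> x w = x' w"
  shows "sibling_weight i x = sibling_weight i x'"
proof -
  have "subtree_of j x = subtree_of j x'" if "j \<noteq> i" for j
    by (rule subtree_of_cong) (use assms that in auto)
  then show ?thesis unfolding sibling_weight_def using assms(1) by auto
qed

lemma level_weight_restrict: "level_weight v k y = level_weight v k (restrict y (level_block v k))"
proof -
  have mem: "take k v @ w \<in> level_block v k" if "w = [] \<or> hd w \<noteq> v!k" for w
    unfolding level_block_def using that by blast
  have "sibling_weight (v!k) (\<lambda>w. y (take k v @ w))
      = sibling_weight (v!k) (\<lambda>w. restrict y (level_block v k) (take k v @ w))"
    by (rule sibling_weight_cong) (use mem[of "[]"] in simp, simp add: mem)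
  moreover have "y [] = restrict y (level_block v k) []" if "k = 0"
    using mem[of "[]"] that by simp
  ultimately show ?thesis by (simp add: level_weight_def child_indicator_def)
qed

lemma disjoint_family_level_block: "disjoint_family_on (level_block v) {..<length v}"
proof -
  have no_overlap: False if kk: "k < k'" "k' < length v"
    and w: "take k v @ w = take k' v @ w'" "w = [] \<or> hd w \<noteq> v!k" for k k' w w'
  proof -
    have "take k' v = take k v @ drop k (take k' v)"
      using kk append_take_drop_id[of k "take k' v"] by (simp add: min_def)
    with w(1) have "w = drop k (take k' v) @ w'" by (metis append.assoc same_append_eq)
    moreover have "drop k (take k' v) \<noteq> []" "hd (drop k (take k' v)) = v ! k"
      using kk by (simp_all add: hd_drop_conv_nth)
    ultimately show False using w(2) by simp
  qed
  show ?thesis unfolding disjoint_family_on_def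
  proof (intro ballI impI)
    fix m n assume mn: "m \<in> {..<length v}" "n \<in> {..<length v}" "m \<noteq> n"
    show "level_block v m \<inter> level_block v n = {}"
    proof (rule ccontr)
      assume "level_block v m \<inter> level_block v n \<noteq> {}"
      then obtain w w' where eq: "take m v @ w = take n v @ w'"
        and hd: "w = [] \<or> hd w \<noteq> v!m" "w' = [] \<or> hd w' \<noteq> v!n"
        unfolding level_block_def by blast
      show False
      proof (cases "m < n")
        case True then show False using no_overlap[of m n w w'] eq hd mn by auto
      next
        case False then have "n < m" using mn by auto
        then show False using no_overlap[of n m w' w] eq hd mn by auto
      qed
    qed
  qed
qed

lemma nn_integral_prod_level_weight:
  "(\<integral>\<^sup>+\<omega>. ennreal (\<Prod>k<length v. level_weight v k (labels_below [] \<omega>)) \<partial>M)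
     = (\<Prod>k<length v. \<integral>\<^sup>+\<omega>. level_weight v k (labels_below [] \<omega>) \<partial>M)"
proof -
  have "indep_vars (\<lambda>_. borel)
      (\<lambda>k \<omega>. level_weight v k (restrict (\<lambda>z. label z \<omega>) (level_block v k))) {..<length v}"
    by (rule indep_vars_label_blocks[OF disjoint_family_level_block]) simp
  then have "indep_vars (\<lambda>_. borel)
      (\<lambda>k \<omega>. ennreal (level_weight v k (restrict (\<lambda>z. label z \<omega>) (level_block v k)))) {..<length v}"
    by (rule indep_vars_compose2) simp
  moreover have "level_weight v k (restrict (\<lambda>z. label z \<omega>) (level_block v k))
      = level_weight v k (labels_below [] \<omega>)" for k \<omega>
    using level_weight_restrict[of v k "\<lambda>z. label z \<omega>"] by (simp add: labels_below_def)
  ultimately have ind: "indep_vars (\<lambda>_. borel)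
      (\<lambda>k \<omega>. ennreal (level_weight v k (labels_below [] \<omega>))) {..<length v}"
    by simp
  have "(\<integral>\<^sup>+\<omega>. (\<Prod>k<length v. ennreal (level_weight v k (labels_below [] \<omega>))) \<partial>M)
      = (\<Prod>k<length v. \<integral>\<^sup>+\<omega>. level_weight v k (labels_below [] \<omega>) \<partial>M)"
    by (rule indep_vars_nn_integral[OF _ ind]) auto
  then show ?thesis by (simp add: prod_ennreal level_weight_nonneg)
qed

lemma nn_integral_level_weight:
  "(\<integral>\<^sup>+\<omega>. level_weight v k (labels_below [] \<omega>) \<partial>M)
     = (if k = 0 then \<integral>\<^sup>+\<omega>. child_indicator (v!k) (labels_below [] \<omega>) \<partial>M
        else \<integral>\<^sup>+\<omega>. sibling_weight (v!k) (labels_below [] \<omega>) \<partial>M)"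
  using nn_integral_labels_below[of "\<lambda>x. ennreal (sibling_weight (v!k) x)" "take k v"]
  by (simp add: level_weight_def labels_below_def)

definition weighted_count :: "nat \<Rightarrow> 'a \<Rightarrow> ennreal" where
  "weighted_count n \<omega> = word_sum n (\<lambda>v. ennreal (\<Prod>k<n. level_weight v k (labels_below [] \<omega>)))"

lemma measurable_weighted_count[measurable]: "weighted_count n \<in> borel_measurable M"
  unfolding weighted_count_def by (rule borel_measurable_word_sum) simp

lemma nn_integral_weighted_count:
  assumes "1 \<le> n"
  shows "(\<integral>\<^sup>+\<omega>. weighted_count n \<omega> \<partial>M)
    = (\<Sum>i. \<integral>\<^sup>+\<omega>. child_indicator i (labels_below [] \<omega>) \<partial>M)
      * (\<Sum>i. \<integral>\<^sup>+\<omega>. sibling_weight i (labels_below [] \<omega>) \<partial>M) ^ (n - 1)"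
proof -
  define e where "e (k::nat) (i::nat) = (if k = 0 then \<integral>\<^sup>+\<omega>. child_indicator i (labels_below [] \<omega>) \<partial>M
    else \<integral>\<^sup>+\<omega>. sibling_weight i (labels_below [] \<omega>) \<partial>M)" for k i
  have "(\<integral>\<^sup>+\<omega>. weighted_count n \<omega> \<partial>M)
      = word_sum n (\<lambda>v. \<integral>\<^sup>+\<omega>. ennreal (\<Prod>k<n. level_weight v k (labels_below [] \<omega>)) \<partial>M)"
    unfolding weighted_count_def by (rule nn_integral_word_sum) simp
  also have "\<dots> = word_sum n (\<lambda>v. \<Prod>k<n. e k (v!k))"
  proof (rule word_sum_cong)
    fix v :: "nat list" assume "length v = n"
    then show "(\<integral>\<^sup>+\<omega>. ennreal (\<Prod>k<n. level_weight v k (labels_below [] \<omega>)) \<partial>M) = (\<Prod>k<n. e k (v!k))"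
      using nn_integral_prod_level_weight[of v] by (simp add: nn_integral_level_weight e_def)
  qed
  also have "\<dots> = (\<Prod>k<n. \<Sum>i. e k i)" by (rule word_sum_prod)
  finally show ?thesis
    using assms by (cases n) (simp_all del: prod.lessThan_Suc add: prod.lessThan_Suc_shift e_def)
qed

lemma level_weight_in_tree:
  assumes v: "in_tree N \<omega> v" "k < length v"
  shows "level_weight v k (labels_below [] \<omega>) = (if 1 \<le> k \<and> (\<exists>j. j \<noteq> v!k
      \<and> in_tree N \<omega> (take k v @ [j]) \<and> P (subtree N R (take k v) j \<omega>)) then lam else 1)"
proof -
  have k: "1 \<le> v!k" "v!k \<le> N (take k v) \<omega>" and u: "in_tree N \<omega> (take k v)"
    using in_tree_nth[OF v] in_tree_take[OF v(1)] by auto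
  show ?thesis
  proof (cases "k = 0")
    case True
    then show ?thesis using k by (simp add: level_weight_def child_indicator_def offspring_labels_below)
  next
    case False
    have "(\<lambda>w. labels_below [] \<omega> (take k v @ w)) = labels_below (take k v) \<omega>"
      by (simp add: labels_below_def)
    moreover have "(1 \<le> j \<and> j \<le> N (take k v) \<omega> \<and> P (subtree_of j (labels_below (take k v) \<omega>)))
        \<longleftrightarrow> (in_tree N \<omega> (take k v @ [j]) \<and> P (subtree N R (take k v) j \<omega>))" for j
      using u subtree_eq[OF u, of j] by (auto simp: in_tree_snoc)
    ultimately show ?thesis
      using k False by (simp add: level_weight_def sibling_weight_def offspring_labels_below)
  qed
qed

lemma prod_level_weight:
  assumes "v \<in> generation N \<omega> n"
  shows "(\<Prod>k<n. level_weight v k (labels_below [] \<omega>)) = lam ^ Gamma N R P \<omega> v"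
proof -
  define C where "C k \<longleftrightarrow> (\<exists>j. j \<noteq> v!k \<and> in_tree N \<omega> (take k v @ [j])
      \<and> P (subtree N R (take k v) j \<omega>))" for k
  have v: "in_tree N \<omega> v" "length v = n" using assms by (auto simp: generation_def)
  have "(\<Prod>k<n. level_weight v k (labels_below [] \<omega>)) = (\<Prod>k<n. if 1 \<le> k \<and> C k then lam else 1)"
    using v by (intro prod.cong) (simp_all add: level_weight_in_tree C_def)
  also have "\<dots> = lam ^ card {k \<in> {1..<n}. C k}"
    by (simp add: prod.If_cases Int_def atLeastLessThan_def conj_ac)
  finally show ?thesis
    unfolding Gamma_eq_card_levels C_def v(2) .
qed

lemma weighted_count_ge:
  assumes "v \<in> generation N \<omega> n"
  shows "ennreal (lam ^ Gamma N R P \<omega> v) \<le> weighted_count n \<omega>"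
  using word_sum_ge[of v n "\<lambda>v. ennreal (\<Prod>k<n. level_weight v k (labels_below [] \<omega>))"] assms
  by (simp add: weighted_count_def prod_level_weight generation_def)

lemma nn_integral_offspring_count:
  assumes "summable (\<lambda>n. real n * pmf p n)"
  shows "(\<integral>\<^sup>+\<omega>. of_nat (N [] \<omega>) \<partial>M) = ennreal (\<Sum>n. real n * pmf p n)"
proof -
  have "(\<integral>\<^sup>+\<omega>. of_nat (N [] \<omega>) \<partial>M) = (\<Sum>n. ennreal (real n * pmf p n))"
    using nn_integral_offspring[of "\<lambda>m. of_nat m" "[]"]
    by (simp add: ennreal_mult' mult.commute ennreal_of_nat_eq_real_of_nat)
  also have "\<dots> = ennreal (\<Sum>n. real n * pmf p n)"
    by (rule suminf_ennreal2) (use assms in auto)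
  finally show ?thesis .
qed

lemma sum_nn_integral_child_indicator:
  assumes "summable (\<lambda>n. real n * pmf p n)"
  shows "(\<Sum>i. \<integral>\<^sup>+\<omega>. child_indicator i (labels_below [] \<omega>) \<partial>M) = ennreal (\<Sum>n. real n * pmf p n)"
proof -
  have "(\<Sum>i. ennreal (child_indicator i (labels_below [] \<omega>))) = of_nat (N [] \<omega>)" for \<omega>
  proof -
    have "(\<Sum>i. ennreal (child_indicator i (labels_below [] \<omega>)))
        = (\<Sum>i\<in>{1..N [] \<omega>}. ennreal (child_indicator i (labels_below [] \<omega>)))"
      by (rule suminf_finite) (auto simp: child_indicator_def offspring_labels_below)
    then show ?thesis by (simp add: child_indicator_def offspring_labels_below)
  qed
  then show ?thesis
    using nn_integral_suminf[of "\<lambda>i \<omega>. ennreal (child_indicator i (labels_below [] \<omega>))", symmetric]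
    by (simp add: nn_integral_offspring_count[OF assms])
qed

definition lonely_children :: "nat \<Rightarrow> 'a \<Rightarrow> ennreal" where
  "lonely_children m \<omega> = (\<Sum>i\<in>{1..m}. \<Prod>j\<in>{1..m}-{i}. ennreal (of_bool (\<not> good_child j \<omega>)))"

lemma measurable_lonely_children[measurable]: "lonely_children m \<in> borel_measurable M"
  unfolding lonely_children_def by measurable

lemma sum_sibling_weight_le:
  "(\<Sum>i. ennreal (sibling_weight i (labels_below [] \<omega>)))
     \<le> ennreal lam * of_nat (N [] \<omega>) + (\<Sum>m. ennreal (of_bool (N [] \<omega> = m)) * lonely_children m \<omega>)"
proof -
  define m0 where "m0 = N [] \<omega>"
  have "(\<Sum>i. ennreal (sibling_weight i (labels_below [] \<omega>)))
      = (\<Sum>i\<in>{1..m0}. ennreal (sibling_weight i (labels_below [] \<omega>)))"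
    by (rule suminf_finite) (auto simp: sibling_weight_def offspring_labels_below m0_def)
  also have "\<dots> \<le> (\<Sum>i\<in>{1..m0}. ennreal lam + (\<Prod>j\<in>{1..m0}-{i}. ennreal (of_bool (\<not> good_child j \<omega>))))"
  proof (rule sum_mono)
    fix i assume i: "i \<in> {1..m0}"
    show "ennreal (sibling_weight i (labels_below [] \<omega>))
        \<le> ennreal lam + (\<Prod>j\<in>{1..m0}-{i}. ennreal (of_bool (\<not> good_child j \<omega>)))"
    proof (cases "\<exists>j. j \<noteq> i \<and> 1 \<le> j \<and> j \<le> m0 \<and> good_child j \<omega>")
      case True
      then show ?thesis
        using i
        by (simp add: sibling_weight_def offspring_labels_below m0_def good_child_def add_increasing2)
    next
      case False
      then have "(\<Prod>j\<in>{1..m0}-{i}. ennreal (of_bool (\<not> good_child j \<omega>))) = 1"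
        by (intro prod.neutral) auto
      then show ?thesis
        using i False by (auto simp: sibling_weight_def offspring_labels_below m0_def good_child_def)
    qed
  qed
  also have "\<dots> = ennreal lam * of_nat m0 + lonely_children m0 \<omega>"
    by (simp add: sum.distrib lonely_children_def mult.commute)
  also have "lonely_children m0 \<omega> = (\<Sum>m. ennreal (of_bool (N [] \<omega> = m)) * lonely_children m \<omega>)"
    by (subst suminf_finite[where N="{m0}"]) (auto simp: m0_def)
  finally show ?thesis unfolding m0_def .
qed

lemma nn_integral_offspring_and_bad_children:
  assumes J: "finite J" "0 \<notin> J"
  shows "(\<integral>\<^sup>+\<omega>. ennreal (of_bool (N [] \<omega> = m)) * (\<Prod>j\<in>J. ennreal (of_bool (\<not> good_child j \<omega>))) \<partial>M)
    = ennreal (pmf p m * (\<Prod>j\<in>J. measure M {\<omega> \<in> space M. \<not> good_child j \<omega>}))"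
proof -
  have "ennreal (of_bool (N [] \<omega> = m)) * (\<Prod>j\<in>J. ennreal (of_bool (\<not> good_child j \<omega>)))
      = ennreal (of_bool (N [] \<omega> = m \<and> (\<forall>j\<in>J. \<not> good_child j \<omega>)))" for \<omega>
    using J by (auto simp: prod_ennreal prod_of_bool)
  then show ?thesis
    using prob_offspring_and_subtrees[OF J, of "\<lambda>_ t. \<not> P t" "\<lambda>n. n = m"]
    by (simp add: nn_integral_of_bool emeasure_eq_measure prob_offspring_eq good_child_def)
qed

lemma nn_integral_lonely_children_le:
  assumes b: "0 \<le> b"
    and bad: "\<And>j. 1 \<le> j \<Longrightarrow> 0 < measure M {\<omega> \<in> space M. j \<le> N [] \<omega>} \<Longrightarrow>
               measure M {\<omega> \<in> space M. \<not> good_child j \<omega>} \<le> b"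
  shows "(\<integral>\<^sup>+\<omega>. ennreal (of_bool (N [] \<omega> = m)) * lonely_children m \<omega> \<partial>M)
    \<le> ennreal (real m * pmf p m * b ^ (m - 1))"
proof -
  have bound: "pmf p m * (\<Prod>j\<in>{1..m}-{i}. measure M {\<omega> \<in> space M. \<not> good_child j \<omega>})
      \<le> pmf p m * b ^ (m - 1)" if i: "i \<in> {1..m}" for i
  proof (cases "pmf p m = 0")
    case False
    have "0 < measure M {\<omega> \<in> space M. j \<le> N [] \<omega>}" if "j \<le> m" for j
    proof -
      have "measure M {\<omega> \<in> space M. N [] \<omega> = m} \<le> measure M {\<omega> \<in> space M. j \<le> N [] \<omega>}"
        by (rule finite_measure_mono) (use that in auto)
      then show ?thesis using False prob_offspring_eq[of "[]" m] pmf_nonneg[of p m] by linarith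
    qed
    then have "(\<Prod>j\<in>{1..m}-{i}. measure M {\<omega> \<in> space M. \<not> good_child j \<omega>}) \<le> (\<Prod>j\<in>{1..m}-{i}. b)"
      by (intro prod_mono) (auto intro: bad)
    also have "\<dots> = b ^ (m - 1)" using i by simp
    finally show ?thesis by (intro mult_left_mono) auto
  qed simp
  have "(\<integral>\<^sup>+\<omega>. ennreal (of_bool (N [] \<omega> = m)) * lonely_children m \<omega> \<partial>M)
      = (\<Sum>i\<in>{1..m}. \<integral>\<^sup>+\<omega>. ennreal (of_bool (N [] \<omega> = m))
          * (\<Prod>j\<in>{1..m}-{i}. ennreal (of_bool (\<not> good_child j \<omega>))) \<partial>M)"
    unfolding lonely_children_def sum_distrib_left by (rule nn_integral_sum) simp
  also have "\<dots> \<le> (\<Sum>i\<in>{1..m}. ennreal (pmf p m * b ^ (m - 1)))"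
  proof (rule sum_mono)
    fix i assume i: "i \<in> {1..m}"
    have J: "finite ({1..m} - {i})" "0 \<notin> {1..m} - {i}" by auto
    show "(\<integral>\<^sup>+\<omega>. ennreal (of_bool (N [] \<omega> = m))
        * (\<Prod>j\<in>{1..m}-{i}. ennreal (of_bool (\<not> good_child j \<omega>))) \<partial>M)
      \<le> ennreal (pmf p m * b ^ (m - 1))"
      unfolding nn_integral_offspring_and_bad_children[OF J] by (rule ennreal_leI[OF bound[OF i]])
  qed
  also have "\<dots> = ennreal (real m * pmf p m * b ^ (m - 1))"
    by (simp add: ennreal_of_nat_eq_real_of_nat ennreal_mult'[symmetric] mult.assoc)
  finally show ?thesis .
qed

lemma sum_nn_integral_sibling_weight_le:
  assumes mean: "summable (\<lambda>n. real n * pmf p n)" and b: "0 \<le> b" "b < 1"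
    and bad: "\<And>j. 1 \<le> j \<Longrightarrow> 0 < measure M {\<omega> \<in> space M. j \<le> N [] \<omega>} \<Longrightarrow>
               measure M {\<omega> \<in> space M. \<not> good_child j \<omega>} \<le> b"
  shows "(\<Sum>i. \<integral>\<^sup>+\<omega>. sibling_weight i (labels_below [] \<omega>) \<partial>M)
    \<le> ennreal (lam * (\<Sum>n. real n * pmf p n) + deriv (gen_fun p) b)"
proof -
  have "(\<Sum>i. \<integral>\<^sup>+\<omega>. sibling_weight i (labels_below [] \<omega>) \<partial>M)
      = (\<integral>\<^sup>+\<omega>. (\<Sum>i. ennreal (sibling_weight i (labels_below [] \<omega>))) \<partial>M)"
    by (rule nn_integral_suminf[symmetric]) simp
  also have "\<dots> \<le> (\<integral>\<^sup>+\<omega>. ennreal lam * of_nat (N [] \<omega>)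
      + (\<Sum>m. ennreal (of_bool (N [] \<omega> = m)) * lonely_children m \<omega>) \<partial>M)"
    by (rule nn_integral_mono) (rule sum_sibling_weight_le)
  also have "\<dots> = ennreal lam * (\<integral>\<^sup>+\<omega>. of_nat (N [] \<omega>) \<partial>M)
      + (\<Sum>m. \<integral>\<^sup>+\<omega>. ennreal (of_bool (N [] \<omega> = m)) * lonely_children m \<omega> \<partial>M)"
    by (simp add: nn_integral_add nn_integral_cmult nn_integral_suminf)
  also have "\<dots> \<le> ennreal lam * ennreal (\<Sum>n. real n * pmf p n)
      + (\<Sum>m. ennreal (real m * pmf p m * b ^ (m - 1)))"
    unfolding nn_integral_offspring_count[OF mean]
    by (intro add_mono order_refl suminf_le nn_integral_lonely_children_le[OF b(1) bad])
      (simp_all add: summableI)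
  also have "(\<Sum>m. ennreal (real m * pmf p m * b ^ (m - 1))) = ennreal (deriv (gen_fun p) b)"
    unfolding deriv_gen_fun(2)[OF mean b]
    by (rule suminf_ennreal2[OF _ deriv_gen_fun(1)[OF mean b]]) (use b in simp)
  finally show ?thesis
    using lam_nonneg deriv_gen_fun_nonneg[OF mean b]
    by (simp add: ennreal_mult' ennreal_plus[symmetric] suminf_nonneg mean)
qed

lemma nn_integral_weighted_count_le:
  assumes mean: "summable (\<lambda>n. real n * pmf p n)" and b: "0 \<le> b" "b < 1"
    and bad: "\<And>j. 1 \<le> j \<Longrightarrow> 0 < measure M {\<omega> \<in> space M. j \<le> N [] \<omega>} \<Longrightarrow>
               measure M {\<omega> \<in> space M. \<not> good_child j \<omega>} \<le> b"
    and n: "1 \<le> n"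
  shows "(\<integral>\<^sup>+\<omega>. weighted_count n \<omega> \<partial>M) \<le> ennreal ((\<Sum>n. real n * pmf p n)
    * (lam * (\<Sum>n. real n * pmf p n) + deriv (gen_fun p) b) ^ (n - 1))"
proof -
  define \<gamma> where "\<gamma> = (\<Sum>n. real n * pmf p n)"
  define a where "a = lam * \<gamma> + deriv (gen_fun p) b"
  have nonneg: "0 \<le> \<gamma>" "0 \<le> a" "0 \<le> a ^ (n - 1)"
    using lam_nonneg deriv_gen_fun_nonneg[OF mean b] suminf_nonneg[OF mean]
    by (simp_all add: \<gamma>_def a_def)
  have "(\<integral>\<^sup>+\<omega>. weighted_count n \<omega> \<partial>M) \<le> ennreal \<gamma> * ennreal a ^ (n - 1)"
    unfolding nn_integral_weighted_count[OF n] sum_nn_integral_child_indicator[OF mean] \<gamma>_def a_def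
    by (intro mult_left_mono power_mono sum_nn_integral_sibling_weight_le[OF mean b bad]) auto
  also have "\<dots> = ennreal (\<gamma> * a ^ (n - 1))"
    by (simp only: ennreal_power[OF nonneg(2)] ennreal_mult[OF nonneg(1,3)])
  finally show ?thesis unfolding \<gamma>_def a_def .
qed

lemma prob_not_good_child_eq_cond_prob:
  assumes j: "1 \<le> j" and pos: "0 < measure M {\<omega> \<in> space M. in_tree N \<omega> [j]}"
  shows "measure M {\<omega> \<in> space M. \<not> good_child j \<omega>}
    = cond_prob M (\<lambda>\<omega>. \<not> P (subtree N R [] j \<omega>)) (\<lambda>\<omega>. in_tree N \<omega> [j])"
proof -
  have child: "in_tree N \<omega> [j] \<longleftrightarrow> j \<le> N [] \<omega>" for \<omega>
    using j by (simp add: in_tree_singleton)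
  have "\<not> P (subtree N R [] j \<omega>) \<and> in_tree N \<omega> [j]
      \<longleftrightarrow> j \<le> N [] \<omega> \<and> (\<forall>j'\<in>{j}. \<not> P (subtree_of j' (labels_below [] \<omega>)))" for \<omega>
    using j subtree_eq[of \<omega> "[]" j] by (auto simp: child in_tree_def)
  then have "measure M {\<omega> \<in> space M. \<not> P (subtree N R [] j \<omega>) \<and> in_tree N \<omega> [j]}
      = measure M {\<omega> \<in> space M. j \<le> N [] \<omega>} * measure M {\<omega> \<in> space M. \<not> good_child j \<omega>}"
    using prob_offspring_and_subtrees[of "{j}" "\<lambda>_ t. \<not> P t" "\<lambda>n. j \<le> n"] j
    by (simp add: good_child_def)
  then show ?thesis using pos by (simp add: cond_prob_def child)
qed

definition two_good_children :: "(nat list \<Rightarrow> nat \<times> real) \<Rightarrow> bool" where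
  "two_good_children x \<longleftrightarrow> 2 \<le> fst (x []) \<and> P (subtree_of 1 x) \<and> P (subtree_of 2 x)"

lemma measurable_two_good_children[measurable]:
  "Measurable.pred (PiM I (\<lambda>_. label_space)) two_good_children"
  unfolding two_good_children_def by measurable

lemma prob_two_good_children_pos:
  assumes b: "b < 1"
    and bad: "\<And>j. 1 \<le> j \<Longrightarrow> 0 < measure M {\<omega> \<in> space M. j \<le> N [] \<omega>} \<Longrightarrow>
               measure M {\<omega> \<in> space M. \<not> good_child j \<omega>} \<le> b"
    and m: "2 \<le> m" "0 < pmf p m"
  shows "0 < measure M {\<omega> \<in> space M. two_good_children (labels_below [] \<omega>)}"
proof -
  have pos: "0 < measure M {\<omega> \<in> space M. j \<le> N [] \<omega>}" if "j \<le> m" for j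
  proof -
    have "measure M {\<omega> \<in> space M. N [] \<omega> = m} \<le> measure M {\<omega> \<in> space M. j \<le> N [] \<omega>}"
      by (rule finite_measure_mono) (use that in auto)
    then show ?thesis using m prob_offspring_eq[of "[]" m] by simp
  qed
  have good: "0 < measure M {\<omega> \<in> space M. good_child j \<omega>}" if "1 \<le> j" "j \<le> m" for j
  proof -
    have "measure M {\<omega> \<in> space M. \<not> good_child j \<omega>} = 1 - measure M {\<omega> \<in> space M. good_child j \<omega>}"
      by (rule prob_neg) simp
    then show ?thesis using bad[OF that(1) pos[OF that(2)]] b by linarith
  qed
  have "{\<omega> \<in> space M. two_good_children (labels_below [] \<omega>)}
      = {\<omega> \<in> space M. 2 \<le> N [] \<omega> \<and> (\<forall>j\<in>{1, 2}. P (subtree_of j (labels_below [] \<omega>)))}"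
    by (auto simp: two_good_children_def offspring_labels_below)
  then have "measure M {\<omega> \<in> space M. two_good_children (labels_below [] \<omega>)}
      = measure M {\<omega> \<in> space M. 2 \<le> N [] \<omega>} * (\<Prod>j\<in>{1, 2}. measure M {\<omega> \<in> space M. good_child j \<omega>})"
    using prob_offspring_and_subtrees[of "{1, 2}" "\<lambda>_. P" "\<lambda>n. 2 \<le> n"]
    by (simp add: good_child_def)
  then show ?thesis using pos[of 2] good[of 1] good[of 2] m by simp
qed

lemma prob_children_two_good_pos:
  assumes "0 < measure M {\<omega> \<in> space M. two_good_children (labels_below [] \<omega>)}" "0 < pmf p m"
  shows "0 < measure M {\<omega> \<in> space M. N [] \<omega> = m \<and> (\<forall>i\<in>{1..m}. two_good_children (labels_below [i] \<omega>))}"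
proof -
  have "measure M {\<omega> \<in> space M. N [] \<omega> = m \<and> (\<forall>i\<in>{1..m}. two_good_children (labels_below [i] \<omega>))}
      = pmf p m * measure M {\<omega> \<in> space M. two_good_children (labels_below [] \<omega>)} ^ m"
    using prob_offspring_and_below_children[of "{1..m}" "\<lambda>_. two_good_children" "\<lambda>n. n = m"]
      prob_labels_below[of two_good_children "[_]"]
    by (simp add: prob_offspring_eq)
  then show ?thesis using assms by simp
qed

lemma Gamma_pos_if_children_two_good:
  assumes children: "N [] \<omega> = m" "\<forall>i\<in>{1..m}. two_good_children (labels_below [i] \<omega>)"
    and v: "v \<in> generation N \<omega> n" and n: "2 \<le> n"
  shows "1 \<le> Gamma N R P \<omega> v"
proof -
  have v: "in_tree N \<omega> v" "length v = n" using v by (auto simp: generation_def)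
  define i where "i = v!0"
  have "1 \<le> i" "i \<le> m" using in_tree_nth[OF v(1), of 0] v(2) n children by (auto simp: i_def)
  then have two: "two_good_children (labels_below [i] \<omega>)" using children by auto
  have take1: "take (Suc 0) v = [i]" using v(2) n unfolding i_def by (cases v) auto
  have it: "in_tree N \<omega> [i]" using in_tree_take[OF v(1), of "Suc 0"] take1 by simp
  define j where "j = (if v!1 = 1 then 2 else (1::nat))"
  have j: "j \<noteq> v!1" "1 \<le> j" "j \<le> N [i] \<omega>" "P (subtree_of j (labels_below [i] \<omega>))"
    using two unfolding j_def two_good_children_def by (auto simp: offspring_labels_below)
  have "in_tree N \<omega> (take (Suc 0) v @ [j]) \<and> P (subtree N R (take (Suc 0) v) j \<omega>)"
    using it j subtree_eq[OF it j(2,3)] in_tree_snoc[of N \<omega> "[i]" j] by (simp add: take1)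
  moreover have "Suc 0 < length v" using v(2) n by simp
  ultimately have "Suc 0 \<in> {k \<in> {1..<length v}. \<exists>j. j \<noteq> v!k \<and> in_tree N \<omega> (take k v @ [j])
      \<and> P (subtree N R (take k v) j \<omega>)}"
    using j(1) by (simp only: One_nat_def mem_Collect_eq atLeastLessThan_iff) blast
  then have "card {Suc 0} \<le> Gamma N R P \<omega> v"
    unfolding Gamma_eq_card_levels by (intro card_mono) auto
  then show ?thesis by simp
qed

lemma exists_event_Gamma_pos:
  assumes mean: "1 < (\<Sum>n. real n * pmf p n)" and b: "b < 1"
    and bad: "\<And>j. 1 \<le> j \<Longrightarrow> 0 < measure M {\<omega> \<in> space M. j \<le> N [] \<omega>} \<Longrightarrow>
               measure M {\<omega> \<in> space M. \<not> good_child j \<omega>} \<le> b"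
  shows "\<exists>E\<in>sets M. 0 < measure M E \<and>
    (\<forall>\<omega>\<in>E. \<forall>n\<ge>2. \<forall>v\<in>generation N \<omega> n. 1 \<le> Gamma N R P \<omega> v)"
proof -
  obtain m where m: "2 \<le> m" "0 < pmf p m" using exists_pmf_ge_2[OF mean] by blast
  define E where "E = {\<omega> \<in> space M. N [] \<omega> = m \<and> (\<forall>i\<in>{1..m}. two_good_children (labels_below [i] \<omega>))}"
  have "E \<in> sets M" unfolding E_def by measurable
  moreover have "0 < measure M E"
    unfolding E_def by (rule prob_children_two_good_pos[OF prob_two_good_children_pos[OF b bad m] m(2)])
  moreover have "\<forall>\<omega>\<in>E. \<forall>n\<ge>2. \<forall>v\<in>generation N \<omega> n. 1 \<le> Gamma N R P \<omega> v"
    unfolding E_def using Gamma_pos_if_children_two_good by blast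
  ultimately show ?thesis by blast
qed

definition heavy_event :: "real \<Rightarrow> nat \<Rightarrow> 'a set" where
  "heavy_event c n = {\<omega> \<in> space M. 1 \<le> ennreal (lam powr (- (c * n))) * weighted_count n \<omega>}"

lemma sets_heavy_event[measurable]: "heavy_event c n \<in> sets M"
  unfolding heavy_event_def by measurable

lemma Gamma_le_imp_heavy_event:
  fixes c :: real
  assumes lam: "0 < lam" "lam < 1" and \<omega>: "\<omega> \<in> space M"
    and v: "v \<in> generation N \<omega> n" and Gamma: "real (Gamma N R P \<omega> v) \<le> c * n"
  shows "\<omega> \<in> heavy_event c n"
proof -
  have "lam powr (c * n) \<le> lam powr real (Gamma N R P \<omega> v)"
    by (rule powr_mono'[OF Gamma]) (use lam in auto)
  then have "lam powr (c * n) \<le> lam ^ Gamma N R P \<omega> v"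
    using lam by (simp add: powr_realpow)
  then have "lam powr (- (c * n)) * lam powr (c * n) \<le> lam powr (- (c * n)) * lam ^ Gamma N R P \<omega> v"
    by (rule mult_left_mono) simp
  then have "1 \<le> lam powr (- (c * n)) * lam ^ Gamma N R P \<omega> v"
    using lam by (simp add: powr_add[symmetric])
  then have "1 \<le> ennreal (lam powr (- (c * n))) * ennreal (lam ^ Gamma N R P \<omega> v)"
    using lam by (simp add: ennreal_mult'[symmetric] ennreal_leI del: ennreal_1 flip: ennreal_1)
  also have "\<dots> \<le> ennreal (lam powr (- (c * n))) * weighted_count n \<omega>"
    by (intro mult_left_mono weighted_count_ge v) simp
  finally show ?thesis using \<omega> by (simp add: heavy_event_def)
qed

lemma measure_heavy_event_le:
  assumes "(\<integral>\<^sup>+\<omega>. weighted_count n \<omega> \<partial>M) \<le> ennreal B" "0 \<le> B"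
  shows "measure M (heavy_event c n) \<le> lam powr (- (c * n)) * B"
proof -
  have "emeasure M (heavy_event c n) = (\<integral>\<^sup>+\<omega>. indicator (heavy_event c n) \<omega> \<partial>M)"
    by simp
  also have "\<dots> \<le> (\<integral>\<^sup>+\<omega>. ennreal (lam powr (- (c * n))) * weighted_count n \<omega> \<partial>M)"
    by (rule nn_integral_mono) (auto simp: heavy_event_def indicator_def)
  also have "\<dots> = ennreal (lam powr (- (c * n))) * (\<integral>\<^sup>+\<omega>. weighted_count n \<omega> \<partial>M)"
    by (rule nn_integral_cmult) simp
  also have "\<dots> \<le> ennreal (lam powr (- (c * n)) * B)"
    using assms by (simp add: ennreal_mult' mult_left_mono)
  finally show ?thesis
    using assms(2) by (simp add: emeasure_eq_measure ennreal_le_iff)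
qed

end

section \<open>Exponential bounds\<close>

locale gw_decay = gw_weighted +
  fixes \<gamma> a :: real
  assumes lam_pos: "0 < lam" and lam_lt_1: "lam < 1" and a_pos: "0 < a" and a_lt_1: "a < 1"
    and \<gamma>_nonneg: "0 \<le> \<gamma>"
    and weighted_count_decay: "\<And>n. 1 \<le> n \<Longrightarrow> (\<integral>\<^sup>+\<omega>. weighted_count n \<omega> \<partial>M) \<le> ennreal (\<gamma> * a ^ (n - 1))"
begin

definition Gamma_rate :: real where
  "Gamma_rate = ln a / (2 * ln lam)"

lemma Gamma_rate_pos: "0 < Gamma_rate"
  using lam_pos lam_lt_1 a_pos a_lt_1 by (simp add: Gamma_rate_def divide_neg_neg)

lemma measure_heavy_event_exp:
  assumes c: "0 \<le> c" "c \<le> Gamma_rate" and n: "1 \<le> n"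
  shows "measure M (heavy_event c n) \<le> \<gamma> / a * exp (ln a / 2 * n)"
proof -
  have "measure M (heavy_event c n) \<le> lam powr (- (c * n)) * (\<gamma> * a ^ (n - 1))"
    using \<gamma>_nonneg a_pos by (intro measure_heavy_event_le weighted_count_decay n) simp
  also have "\<dots> = \<gamma> / a * (lam powr (- (c * n)) * a ^ n)"
    using a_pos n by (cases n) simp_all
  also have "\<dots> \<le> \<gamma> / a * exp (ln a / 2 * n)"
    using powr_power_le_exp[OF lam_pos lam_lt_1 a_pos c(1)] c(2) \<gamma>_nonneg a_pos
    by (intro mult_left_mono) (simp_all add: Gamma_rate_def)
  finally show ?thesis .
qed

lemma AE_Gamma_growth:
  "AE \<omega> in M. \<forall>\<^sub>F n in sequentially. \<forall>v\<in>generation N \<omega> n. Gamma_rate * n < real (Gamma N R P \<omega> v)"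
proof -
  have "summable (\<lambda>n. measure M (heavy_event Gamma_rate n))"
  proof (rule summable_comparison_test'[where N=1])
    show "summable (\<lambda>n. \<gamma> / a * exp (ln a / 2) ^ n)"
      by (intro summable_mult summable_geometric) (use a_pos a_lt_1 in simp)
    show "norm (measure M (heavy_event Gamma_rate n)) \<le> \<gamma> / a * exp (ln a / 2) ^ n" if "1 \<le> n" for n
      using measure_heavy_event_exp[OF less_imp_le[OF Gamma_rate_pos] order_refl that]
      by (simp add: exp_of_nat_mult[symmetric] mult.commute)
  qed
  then have "AE \<omega> in M. \<forall>\<^sub>F n in sequentially. \<omega> \<in> space M - heavy_event Gamma_rate n"
    by (intro borel_cantelli_AE1) (simp_all add: less_top[symmetric])
  then show ?thesis
  proof (rule AE_mp, intro AE_I2 impI)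
    fix \<omega> assume \<omega>: "\<omega> \<in> space M"
    assume "\<forall>\<^sub>F n in sequentially. \<omega> \<in> space M - heavy_event Gamma_rate n"
    then show "\<forall>\<^sub>F n in sequentially. \<forall>v\<in>generation N \<omega> n. Gamma_rate * n < real (Gamma N R P \<omega> v)"
      by (rule eventually_mono) (meson Gamma_le_imp_heavy_event[OF lam_pos lam_lt_1 \<omega>] DiffD2 not_le)
  qed
qed

lemma AE_infinitely_many_good_siblings:
  "AE \<omega> in M. \<forall>x :: nat \<Rightarrow> nat. (\<forall>n. in_tree N \<omega> (map x [0..<n])) \<longrightarrow>
     (\<exists>\<^sub>\<infinity>n. \<exists>j. j \<noteq> x n \<and> in_tree N \<omega> (map x [0..<n] @ [j]) \<and> P (subtree N R (map x [0..<n]) j \<omega>))"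
  using AE_Gamma_growth
  by (rule eventually_mono) (blast intro: infinitely_many_good_levels[OF Gamma_rate_pos])

lemma exp_bound_min_Gamma:
  assumes E: "E \<in> sets M" "0 < measure M E"
    and Gamma_E: "\<forall>\<omega>\<in>E. \<forall>n\<ge>2. \<forall>v\<in>generation N \<omega> n. 1 \<le> Gamma N R P \<omega> v"
  shows "\<exists>C1 C2 :: real. 0 < C1 \<and> 0 < C2 \<and>
    (\<forall>n \<ge> 2. measure M {\<omega> \<in> space M. generation N \<omega> n \<noteq> {} \<and>
       real (Min (Gamma N R P \<omega> ` generation N \<omega> n)) \<le> C1 * real n} \<le> exp (- C2 * real n))"
proof -
  define \<kappa> where "\<kappa> = - ln a / 2"
  have \<kappa>: "0 < \<kappa>" using a_pos a_lt_1 by (simp add: \<kappa>_def)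
  obtain n0 where n0: "\<And>n. n0 \<le> n \<Longrightarrow> \<gamma> / a * exp (- \<kappa> * real n) \<le> exp (- \<kappa> / 2 * real n)"
    using eventually_mult_exp_le[OF \<kappa>] by blast
  define C1 where "C1 = min Gamma_rate (1 / (2 * (real n0 + 1)))"
  have C1: "0 < C1" "C1 \<le> Gamma_rate" "C1 \<le> 1 / (2 * (real n0 + 1))"
    using Gamma_rate_pos by (auto simp: C1_def)
  define S where "S n = {\<omega> \<in> space M. generation N \<omega> n \<noteq> {} \<and>
    real (Min (Gamma N R P \<omega> ` generation N \<omega> n)) \<le> C1 * real n}" for n
  have small: "measure M (S n) \<le> 1 - measure M E" if n: "2 \<le> n" "n < n0 + 1" for n
  proof -
    have "C1 * n \<le> 1 / (2 * (real n0 + 1)) * (real n0 + 1)"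
      using C1 n by (intro mult_mono) auto
    also have "\<dots> = 1 / 2" by (simp add: field_simps)
    finally have "C1 * n < 1" by simp
    then have "S n \<subseteq> space M - E"
      using Gamma_E n(1) by (force simp: S_def dest!: bex_generation_Gamma_le)
    then show ?thesis using measure_le_of_subset[of "space M - E"] prob_compl[OF E(1)] E(1) by auto
  qed
  have large: "measure M (S n) \<le> exp (- (\<kappa> / 2) * n)" if "n0 + 1 \<le> n" for n
  proof -
    have "S n \<subseteq> heavy_event C1 n"
      by (auto simp: S_def dest!: bex_generation_Gamma_le
          intro: Gamma_le_imp_heavy_event[OF lam_pos lam_lt_1])
    then have "measure M (S n) \<le> \<gamma> / a * exp (- \<kappa> * n)"
      using measure_le_of_subset[of "heavy_event C1 n" "S n"] measure_heavy_event_exp[of C1 n] C1 that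
      by (simp add: \<kappa>_def)
    then show ?thesis using n0[of n] that by simp
  qed
  obtain C2 where "0 < C2" "\<forall>n\<ge>2. measure M (S n) \<le> exp (- C2 * n)"
    using exp_decay_of_bounds[of 2 "n0 + 1" "\<lambda>n. measure M (S n)", OF small _ large] E(2) \<kappa> by auto
  then show ?thesis using C1(1) unfolding S_def by blast
qed

end

theorem lemma1:
  fixes M :: "'a measure"
    and N :: "nat list \<Rightarrow> 'a \<Rightarrow> nat"
    and R :: "nat list \<Rightarrow> 'a \<Rightarrow> real"
    and p :: "nat pmf"
    and Fd :: "real measure"
    and P :: "(nat list \<Rightarrow> bool \<times> real) \<Rightarrow> bool"
    and \<epsilon>0 :: real
  assumes M: "prob_space M"
    and N_meas: "\<And>v. N v \<in> measurable M (count_space UNIV)"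
    and R_meas: "\<And>v. R v \<in> borel_measurable M"
    and Fd_prob: "prob_space Fd" and Fd_sets: "sets Fd = sets borel"
    and NR_distr: "\<And>v. distr M (count_space UNIV \<Otimes>\<^sub>M borel) (\<lambda>\<omega>. (N v \<omega>, R v \<omega>))
                     = measure_pmf p \<Otimes>\<^sub>M Fd"
    and Fd_nonneg: "AE x in Fd. 0 \<le> x"
    and indep: "prob_space.indep_vars M (\<lambda>_. count_space UNIV \<Otimes>\<^sub>M borel)
                  (\<lambda>v \<omega>. (N v \<omega>, R v \<omega>)) UNIV"
    and mean_fin: "summable (\<lambda>n. real n * pmf p n)"
    and mean_gt1: "(\<Sum>n. real n * pmf p n) > 1"
    and q_lt1: "extinction_prob M N < 1"
    and eps_pos: "\<epsilon>0 > 0"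
    and eps1: "0 < extinction_prob M N + 2 * \<epsilon>0"
    and eps2: "extinction_prob M N + 2 * \<epsilon>0 < 1"
    and eps3: "deriv (gen_fun p) (extinction_prob M N + 2 * \<epsilon>0) + 2 * \<epsilon>0 < 1"
    and P_meas: "Measurable.pred tree_space P"
    and hyp: "\<And>j. 1 \<le> j \<Longrightarrow> measure M {\<omega> \<in> space M. in_tree N \<omega> [j]} > 0 \<Longrightarrow>
               cond_prob M (\<lambda>\<omega>. \<not> P (subtree N R [] j \<omega>)) (\<lambda>\<omega>. in_tree N \<omega> [j])
                 \<le> extinction_prob M N + 2 * \<epsilon>0"
  shows "(AE \<omega> in M. \<forall>x :: nat \<Rightarrow> nat. (\<forall>n. in_tree N \<omega> (map x [0..<n])) \<longrightarrow>
            (\<exists>\<^sub>\<infinity>n. \<exists>j. j \<noteq> x n \<and> in_tree N \<omega> (map x [0..<n] @ [j])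
                       \<and> P (subtree N R (map x [0..<n]) j \<omega>)))
       \<and> (\<exists>C1 C2 :: real. 0 < C1 \<and> 0 < C2 \<and>
            (\<forall>n \<ge> 2. measure M {\<omega> \<in> space M. generation N \<omega> n \<noteq> {} \<and>
                 real (Min (Gamma N R P \<omega> ` generation N \<omega> n)) \<le> C1 * real n}
               \<le> exp (- C2 * real n)))"
proof -
  define b where "b = extinction_prob M N + 2 * \<epsilon>0"
  define \<gamma> where "\<gamma> = (\<Sum>n. real n * pmf p n)"
  define d where "d = deriv (gen_fun p) b"
  define lam where "lam = (1 - d) / (2 * \<gamma>)"
  have b: "0 \<le> b" "b < 1" using eps1 eps2 by (simp_all add: b_def)
  have d: "0 \<le> d" "d < 1"
    using deriv_gen_fun_nonneg[OF mean_fin b] eps3 eps_pos by (simp_all add: d_def b_def)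
  have \<gamma>: "1 < \<gamma>" using mean_gt1 by (simp add: \<gamma>_def)
  have lam: "0 < lam" "lam < 1" using d \<gamma> by (simp_all add: lam_def pos_divide_less_eq)
  have "lam * \<gamma> = (1 - d) / 2" using \<gamma> by (simp add: lam_def)
  then have a: "lam * \<gamma> + d = (1 + d) / 2" by argo
  interpret gw_weighted M N R p Fd P lam
    by (intro gw_weighted.intro gw_tree.intro gw_tree_axioms.intro gw_weighted_axioms.intro)
      (fact M N_meas R_meas Fd_prob NR_distr indep P_meas less_imp_le[OF lam(1)])+
  have bad: "measure M {\<omega> \<in> space M. \<not> good_child j \<omega>} \<le> b"
    if "1 \<le> j" "0 < measure M {\<omega> \<in> space M. j \<le> N [] \<omega>}" for j
    using that hyp[of j] prob_not_good_child_eq_cond_prob[of j] by (simp add: in_tree_singleton b_def)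
  have decay: "(\<integral>\<^sup>+\<omega>. weighted_count n \<omega> \<partial>M) \<le> ennreal (\<gamma> * ((1 + d) / 2) ^ (n - 1))" if "1 \<le> n" for n
    using nn_integral_weighted_count_le[OF mean_fin b bad that]
    unfolding \<gamma>_def[symmetric] d_def[symmetric] a .
  interpret gw_decay M N R p Fd P lam \<gamma> "(1 + d) / 2"
    by unfold_locales (use lam d \<gamma> decay in simp_all)
  obtain E where "E \<in> sets M" "0 < measure M E"
    "\<forall>\<omega>\<in>E. \<forall>n\<ge>2. \<forall>v\<in>generation N \<omega> n. 1 \<le> Gamma N R P \<omega> v"
    using exists_event_Gamma_pos[OF mean_gt1 b(2) bad] by blast
  then show ?thesis using AE_infinitely_many_good_siblings exp_bound_min_Gamma by blast
qed

end
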